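(* Let $\beta>0$ and let $V\in\mathbb R^{d\times d}$ be real symmetric with orthonormal eigenbasis $(e_k)$ and eigenvalues $(\lambda_k)$. Consider on $(\mathbb S^{d-1})^n$ the system \[ \dot x_i=F_i(x):=P^\perp_{x_i}\Big(\sum_{j=1}^n K_{ij}(x)Vx_j\Big),\qquad K_{ij}(x)=\frac{e^{\beta\langle x_i,Vx_j\rangle}}{\sum_{\ell=1}^n e^{\beta\langle x_i,Vx_\ell\rangle}}. \] Fix $p\in[d]$ and signs $s_1,\dots,s_n\in\{\pm1\}$, and let $x_i^*=s_ie_p$ (a pure-mode equilibrium). For tangent perturbations $x_i=(x_i^*+y_i)/\|x_i^*+y_i\|$ with $\langle y_i,x_i^*\rangle=0$, one has \[ F_i(x)=-\gamma_iy_i+\sum_{j=1}^nK_{ij}^*Vy_j+O(|y|^2),\qquad |y|:=\max_m\|y_m\|, \] so that the linearized tangent system is \[ \dot y_i=-\gamma_iy_i+\sum_{j=1}^nK_{ij}^*Vy_j,\quad i\in[n], \] where $K_{ij}^*:=K_{ij}(x^* )$ and $\gamma_i:=\lambda_ps_i\sum_{j=1}^nK_{ij}^*s_j$.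
   Context: $P^\perp_xy=y-\langle x,y\rangle x$ denotes the orthogonal projection onto $T_x\mathbb S^{d-1}$. *)

theory Defs
  imports "HOL-Analysis.Analysis"
begin

definition Pperp :: "real^'d \<Rightarrow> real^'d \<Rightarrow> real^'d" where
  "Pperp x y = y - (x \<bullet> y) *\<^sub>R x"

definition Kw :: "real \<Rightarrow> real^'d^'d \<Rightarrow> ('n::finite \<Rightarrow> real^'d) \<Rightarrow> 'n \<Rightarrow> 'n \<Rightarrow> real" where
  "Kw \<beta> V x i j =
     exp (\<beta> * (x i \<bullet> (V *v x j))) / (\<Sum>l\<in>UNIV. exp (\<beta> * (x i \<bullet> (V *v x l))))"

definition Fsys :: "real \<Rightarrow> real^'d^'d \<Rightarrow> ('n::finite \<Rightarrow> real^'d) \<Rightarrow> 'n \<Rightarrow> real^'d" where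
  "Fsys \<beta> V x i = Pperp (x i) (\<Sum>j\<in>UNIV. Kw \<beta> V x i j *\<^sub>R (V *v x j))"

end

theory Submission
  imports Defs
begin

text \<open>Write x_i = (x*_i + y_i) / |x*_i + y_i| and split the weights as K = K* + (K - K*).
  With frozen weights the field is P_{x_i} (sum_j K*_ij V x_j), and
  V x_j = lambda_p s_j e_p + V y_j + O(|y|^2).  The first term contributes -gamma_i y_i + O(|y|^2)
  because P_{x_i} x*_i = -y_i + O(|y|^2); the second contributes sum_j K*_ij V y_j + O(|y|^2)
  because V y_j is orthogonal to x*_i (V is symmetric and y_j is orthogonal to e_p), so its
  component along x_i is only quadratic.  The weight change K - K* is O(|y|) since softmax is
  Lipschitz, and it multiplies P_{x_i} (V x_j) = O(|y|), because V x*_j is parallel to x*_i.\<close>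

definition softmax :: "('n::finite \<Rightarrow> real) \<Rightarrow> 'n \<Rightarrow> real" where
  "softmax a j = exp (a j) / (\<Sum>l\<in>UNIV. exp (a l))"

lemma Kw_eq_softmax: "Kw \<beta> V x i j = softmax (\<lambda>l. \<beta> * (x i \<bullet> (V *v x l))) j"
  by (simp add: Kw_def softmax_def)

lemma softmax_nonneg: "0 \<le> softmax a j"
  by (simp add: softmax_def sum_nonneg)

lemma sum_softmax: "(\<Sum>j\<in>UNIV. softmax a j) = 1"
proof -
  have "(\<Sum>l\<in>UNIV. exp (a l)) > 0"
    by (intro sum_pos) auto
  then show ?thesis
    by (simp add: softmax_def flip: sum_divide_distrib)
qed

lemma softmax_le_1: "softmax a j \<le> 1"
proof -
  have "softmax a j \<le> (\<Sum>l\<in>UNIV. softmax a l)"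
    by (rule member_le_sum) (simp_all add: softmax_nonneg)
  then show ?thesis
    by (simp add: sum_softmax)
qed

lemma softmax_le_exp_mult:
  assumes "\<And>l. \<bar>a l - b l\<bar> \<le> t"
  shows "softmax a j \<le> exp (2 * t) * softmax b j"
proof -
  have num: "exp (a j) \<le> exp t * exp (b j)"
    using assms[of j] by (simp flip: exp_add)
  have "exp (- t) * (\<Sum>l\<in>UNIV. exp (b l)) \<le> (\<Sum>l\<in>UNIV. exp (a l))"
    unfolding sum_distrib_left
  proof (intro sum_mono)
    fix l
    show "exp (- t) * exp (b l) \<le> exp (a l)"
      using assms[of l] by (simp flip: exp_add)
  qed
  moreover have "0 < exp (- t) * (\<Sum>l\<in>UNIV. exp (b l))"
    by (intro mult_pos_pos sum_pos) auto
  ultimately have "softmax a j \<le> exp t * exp (b j) / (exp (- t) * (\<Sum>l\<in>UNIV. exp (b l)))"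
    unfolding softmax_def using num by (intro frac_le) auto
  also have "\<dots> = exp (2 * t) * softmax b j"
    by (simp add: softmax_def exp_minus field_simps flip: exp_add)
  finally show ?thesis .
qed

lemma softmax_diff_le:
  assumes "\<And>l. \<bar>a l - b l\<bar> \<le> t"
  shows "\<bar>softmax a j - softmax b j\<bar> \<le> exp (2 * t) - 1"
proof -
  have "0 \<le> t"
    using assms[of j] by linarith
  then have "0 \<le> exp (2 * t) - 1"
    by simp
  have "softmax a j - softmax b j \<le> (exp (2 * t) - 1) * softmax b j"
    using softmax_le_exp_mult[OF assms] by (simp add: algebra_simps)
  moreover have "softmax b j - softmax a j \<le> (exp (2 * t) - 1) * softmax a j"
    using softmax_le_exp_mult[of b a t] assms by (simp add: abs_minus_commute algebra_simps)
  moreover have "(exp (2 * t) - 1) * softmax c j \<le> exp (2 * t) - 1" for c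
    using softmax_le_1 \<open>0 \<le> exp (2 * t) - 1\<close> by (rule mult_left_le)
  ultimately show ?thesis
    unfolding abs_le_iff by (smt (verit))
qed

lemma exp_minus_one_le: "exp u - 1 \<le> u * exp (u::real)"
proof -
  have "(1 - u) * exp u \<le> exp (- u) * exp u"
    using exp_minus_ge[of u] by (intro mult_right_mono) auto
  then show ?thesis
    by (simp add: algebra_simps flip: exp_add)
qed

lemma convex_comb_norm_le:
  fixes v :: "'a \<Rightarrow> 'b::real_normed_vector"
  assumes "\<And>j. j \<in> A \<Longrightarrow> 0 \<le> w j" and "sum w A = 1"
    and "\<And>j. j \<in> A \<Longrightarrow> norm (v j) \<le> M"
  shows "norm (\<Sum>j\<in>A. w j *\<^sub>R v j) \<le> M"
proof -
  have "norm (\<Sum>j\<in>A. w j *\<^sub>R v j) \<le> (\<Sum>j\<in>A. w j * M)"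
    using assms(1,3) by (intro order_trans[OF norm_sum] sum_mono) (simp add: mult_left_mono)
  also have "\<dots> = M"
    using assms(2) by (simp flip: sum_distrib_right)
  finally show ?thesis .
qed

lemma Kw_nonneg: "0 \<le> Kw \<beta> V x i j"
  by (simp add: Kw_eq_softmax softmax_nonneg)

lemma sum_Kw: "(\<Sum>j\<in>UNIV. Kw \<beta> V x i j) = 1"
  by (simp add: Kw_eq_softmax sum_softmax)

lemma Kw_diff_le:
  fixes x x' :: "'n::finite \<Rightarrow> real^'d"
  assumes "0 \<le> \<beta>" and V_bound: "\<And>z. norm (V *v z) \<le> B * norm z"
    and unit: "\<And>m. norm (x m) = 1" "\<And>m. norm (x' m) = 1"
    and close: "\<And>m. norm (x m - x' m) \<le> \<rho>"
  shows "\<bar>Kw \<beta> V x i j - Kw \<beta> V x' i j\<bar> \<le> exp (4 * \<beta> * B * \<rho>) - 1"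
proof -
  have "0 \<le> B"
    using V_bound[of "x i"] unit(1)[of i] by (metis mult_1_right norm_ge_zero order_trans)
  have energy_diff: "\<bar>x i \<bullet> (V *v x l) - x' i \<bullet> (V *v x' l)\<bar> \<le> 2 * B * \<rho>" for l
  proof -
    have "\<bar>x i \<bullet> (V *v x l) - x' i \<bullet> (V *v x' l)\<bar>
        = \<bar>(x i - x' i) \<bullet> (V *v x l) + x' i \<bullet> (V *v (x l - x' l))\<bar>"
      by (simp add: inner_diff_left inner_diff_right matrix_vector_mult_diff_distrib)
    also have "\<dots> \<le> norm (x i - x' i) * norm (V *v x l) + norm (x' i) * norm (V *v (x l - x' l))"
      by (intro order_trans[OF abs_triangle_ineq] add_mono Cauchy_Schwarz_ineq2)
    also have "\<dots> \<le> \<rho> * B + 1 * (B * \<rho>)"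
    proof -
      have "norm (V *v x l) \<le> B"
        using V_bound[of "x l"] unit(1)[of l] by simp
      moreover have "norm (V *v (x l - x' l)) \<le> B * \<rho>"
        using V_bound[of "x l - x' l"] mult_left_mono[OF close[of l] \<open>0 \<le> B\<close>] by linarith
      ultimately show ?thesis
        using close[of i] unit(2)[of i] \<open>0 \<le> B\<close> order_trans[OF norm_ge_zero close[of i]]
        by (intro add_mono mult_mono) auto
    qed
    finally show ?thesis
      by simp
  qed
  have "\<bar>\<beta> * (x i \<bullet> (V *v x l)) - \<beta> * (x' i \<bullet> (V *v x' l))\<bar> \<le> 2 * \<beta> * B * \<rho>" for l
    using mult_left_mono[OF energy_diff \<open>0 \<le> \<beta>\<close>]
    by (simp add: abs_mult \<open>0 \<le> \<beta>\<close> mult_ac flip: right_diff_distrib)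
  then have "\<bar>softmax (\<lambda>l. \<beta> * (x i \<bullet> (V *v x l))) j - softmax (\<lambda>l. \<beta> * (x' i \<bullet> (V *v x' l))) j\<bar>
      \<le> exp (2 * (2 * \<beta> * B * \<rho>)) - 1"
    by (rule softmax_diff_le)
  then show ?thesis
    by (simp add: Kw_eq_softmax mult_ac)
qed

lemma linear_Pperp: "linear (Pperp x)"
  by (intro linearI) (simp_all add: Pperp_def inner_add_right algebra_simps)

lemma Pperp_self: "norm x = 1 \<Longrightarrow> Pperp x x = 0"
  by (simp add: Pperp_def norm_eq_1)

lemma Pperp_diff_multiple: "norm x = 1 \<Longrightarrow> Pperp x (v - c *\<^sub>R x) = Pperp x v"
  by (simp add: linear_diff[OF linear_Pperp] linear_scale[OF linear_Pperp] Pperp_self)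

lemma norm_Pperp_le:
  assumes "norm x = 1"
  shows "norm (Pperp x v) \<le> norm v"

proof -
  have "Pperp x v \<bullet> x = 0"
    using assms by (simp add: Pperp_def inner_diff_left norm_eq_1 inner_commute[of v x])
  then have "orthogonal (Pperp x v) ((x \<bullet> v) *\<^sub>R x)"
    by (simp add: orthogonal_def)
  moreover have "v = Pperp x v + (x \<bullet> v) *\<^sub>R x"
    by (simp add: Pperp_def)
  ultimately have "(norm v)\<^sup>2 = (norm (Pperp x v))\<^sup>2 + (norm ((x \<bullet> v) *\<^sub>R x))\<^sup>2"
    by (metis norm_add_Pythagorean)
  then have "(norm (Pperp x v))\<^sup>2 \<le> (norm v)\<^sup>2"
    by simp
  then show ?thesis
    by (rule power2_le_imp_le) simp
qed

lemma norm_Pperp_le_dist: "norm x = 1 \<Longrightarrow> norm (Pperp x v) \<le> norm (v - c *\<^sub>R x)"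
  using Pperp_diff_multiple norm_Pperp_le by metis

context
  fixes a b :: "'a::real_inner"
  assumes unit: "norm a = 1" and orth: "a \<bullet> b = 0"
begin

lemma norm_add_orthogonal_sq: "(norm (a + b))\<^sup>2 = 1 + (norm b)\<^sup>2"
  using norm_add_Pythagorean[of a b] unit orth by (simp add: orthogonal_def)

lemma one_le_norm_add_orthogonal: "1 \<le> norm (a + b)"
proof (rule power2_le_imp_le)
  show "1\<^sup>2 \<le> (norm (a + b))\<^sup>2"
    using norm_add_orthogonal_sq by simp
qed simp

lemma norm_normalize_add: "norm ((1 / norm (a + b)) *\<^sub>R (a + b)) = 1"
  using one_le_norm_add_orthogonal by auto

lemma dist_normalize_add_le: "norm ((1 / norm (a + b)) *\<^sub>R (a + b) - (a + b)) \<le> (norm b)\<^sup>2"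
proof -
  define \<nu> where "\<nu> = norm (a + b)"
  have "1 \<le> \<nu>"
    unfolding \<nu>_def by (rule one_le_norm_add_orthogonal)
  have "norm ((1 / \<nu>) *\<^sub>R (a + b) - (a + b)) = norm ((1 / \<nu> - 1) *\<^sub>R (a + b))"
    by (simp add: algebra_simps)
  also have "\<dots> = (1 - 1 / \<nu>) * \<nu>"
    using \<open>1 \<le> \<nu>\<close> by (simp add: \<nu>_def[symmetric] abs_of_nonpos)
  also have "\<dots> = \<nu> - 1"
    using \<open>1 \<le> \<nu>\<close> by (simp add: field_simps)
  also have "\<dots> \<le> \<nu>\<^sup>2 - 1"
    using \<open>1 \<le> \<nu>\<close> by (simp add: power2_eq_square)
  also have "\<dots> = (norm b)\<^sup>2"
    unfolding \<nu>_def norm_add_orthogonal_sq by simp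
  finally show ?thesis
    unfolding \<nu>_def .
qed

lemma dist_normalize_add_base_le: "norm ((1 / norm (a + b)) *\<^sub>R (a + b) - a) \<le> norm b"
proof -
  define \<nu> where "\<nu> = norm (a + b)"
  define x where "x = (1 / \<nu>) *\<^sub>R (a + b)"
  have "1 \<le> \<nu>"
    unfolding \<nu>_def by (rule one_le_norm_add_orthogonal)
  have "x \<bullet> a = 1 / \<nu>"
    using unit orth by (simp add: x_def inner_add_left norm_eq_1 inner_commute[of b a])
  moreover have "x \<bullet> x = 1"
    unfolding x_def \<nu>_def norm_eq_1[symmetric] by (rule norm_normalize_add)
  moreover have "a \<bullet> a = 1"
    using unit by (simp add: norm_eq_1)
  ultimately have "(norm (x - a))\<^sup>2 = 2 - 2 / \<nu>"
    by (simp add: power2_norm_eq_inner inner_diff_left inner_diff_right inner_commute[of a x])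
  also have "\<dots> = 2 * (\<nu> - 1) / \<nu>"
    using \<open>1 \<le> \<nu>\<close> by (simp add: field_simps)
  also have "\<dots> \<le> 2 * (\<nu> - 1)"
    using \<open>1 \<le> \<nu>\<close> by (simp add: divide_le_eq mult_le_cancel_left1)
  also have "\<dots> \<le> (\<nu> + 1) * (\<nu> - 1)"
    using \<open>1 \<le> \<nu>\<close> by (intro mult_right_mono) auto
  also have "\<dots> = \<nu>\<^sup>2 - 1"
    by (simp add: power2_eq_square algebra_simps)
  also have "\<dots> = (norm b)\<^sup>2"
    unfolding \<nu>_def norm_add_orthogonal_sq by simp
  finally show ?thesis
    unfolding x_def \<nu>_def by (rule power2_le_imp_le) simp
qed

end

lemma Pperp_normalize_add_le:
  fixes a b :: "real^'d"
  assumes "norm a = 1" and "a \<bullet> b = 0"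
  shows "norm (Pperp ((1 / norm (a + b)) *\<^sub>R (a + b)) a + b) \<le> (norm b)\<^sup>2"
proof -
  define \<nu> where "\<nu> = norm (a + b)"
  have "1 \<le> \<nu>"
    unfolding \<nu>_def using assms by (rule one_le_norm_add_orthogonal)
  have "(a + b) \<bullet> a = 1"
    using assms by (simp add: inner_add_left norm_eq_1 inner_commute[of b a])
  then have "((1 / \<nu>) *\<^sub>R (a + b)) \<bullet> a = 1 / \<nu>"
    by simp
  then have "Pperp ((1 / \<nu>) *\<^sub>R (a + b)) a + b = (1 - 1 / \<nu>\<^sup>2) *\<^sub>R (a + b)"
    unfolding Pperp_def by (simp add: power2_eq_square algebra_simps)
  then have "norm (Pperp ((1 / \<nu>) *\<^sub>R (a + b)) a + b) = (1 - 1 / \<nu>\<^sup>2) * \<nu>"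
    using \<open>1 \<le> \<nu>\<close> by (simp add: \<nu>_def[symmetric] power_le_one)
  also have "\<dots> = (\<nu>\<^sup>2 - 1) / \<nu>"
    using \<open>1 \<le> \<nu>\<close> by (simp add: field_simps power2_eq_square)
  also have "\<dots> \<le> (\<nu>\<^sup>2 - 1) / 1"
    using \<open>1 \<le> \<nu>\<close> by (intro divide_left_mono) (simp_all add: one_le_power)
  also have "\<dots> = \<nu>\<^sup>2 - 1"
    by simp
  also have "\<dots> = (norm b)\<^sup>2"
    unfolding \<nu>_def norm_add_orthogonal_sq[OF assms] by simp
  finally show ?thesis
    unfolding \<nu>_def .
qed

locale pure_mode_perturbation =
  fixes \<beta> :: real and V :: "real^'d^'d" and B :: real and e :: "real^'d" and lam :: real
    and s :: "'n::finite \<Rightarrow> real" and y :: "'n \<Rightarrow> real^'d" and r :: real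
  assumes beta_nonneg: "0 \<le> \<beta>"
    and V_symmetric: "transpose V = V"
    and V_bound: "\<And>z. norm (V *v z) \<le> B * norm z"
    and norm_e: "norm e = 1"
    and V_e: "V *v e = lam *\<^sub>R e"
    and sign: "\<And>m. s m = 1 \<or> s m = -1"
    and tangent: "\<And>m. e \<bullet> y m = 0"
    and norm_y_le: "\<And>m. norm (y m) \<le> r"
    and r_le_1: "r \<le> 1"
begin

definition x_star :: "'n \<Rightarrow> real^'d" where
  "x_star = (\<lambda>m. s m *\<^sub>R e)"

definition x_pert :: "'n \<Rightarrow> real^'d" where
  "x_pert = (\<lambda>m. (1 / norm (x_star m + y m)) *\<^sub>R (x_star m + y m))"

lemma B_nonneg: "0 \<le> B"
  using V_bound[of e] norm_e by (metis mult_1_right norm_ge_zero order_trans)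

lemma r_nonneg: "0 \<le> r"
  using norm_y_le by (meson norm_ge_zero order_trans)

lemma abs_s: "\<bar>s m\<bar> = 1"
  using sign[of m] by auto

lemma s_mult_s: "s m * s m = 1"
  using sign[of m] by auto

lemma norm_x_star: "norm (x_star m) = 1"
  by (simp add: x_star_def norm_e abs_s)

lemma x_star_inner_y: "x_star m \<bullet> y j = 0"
  by (simp add: x_star_def tangent)

lemma norm_x_pert: "norm (x_pert m) = 1"
  unfolding x_pert_def using norm_x_star x_star_inner_y by (rule norm_normalize_add)

lemma dist_x_pert_x_star: "norm (x_pert m - x_star m) \<le> r"
  unfolding x_pert_def
  using dist_normalize_add_base_le[OF norm_x_star x_star_inner_y] norm_y_le order_trans by blast

lemma dist_x_pert_tangent: "norm (x_pert m - (x_star m + y m)) \<le> r\<^sup>2"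
proof -
  have "(norm (y m))\<^sup>2 \<le> r\<^sup>2"
    using norm_y_le by (simp add: power_mono)
  then show ?thesis
    unfolding x_pert_def
    using dist_normalize_add_le[OF norm_x_star x_star_inner_y] order_trans by blast
qed

lemma Pperp_x_pert_x_star: "norm (Pperp (x_pert m) (x_star m) + y m) \<le> r\<^sup>2"
proof -
  have "(norm (y m))\<^sup>2 \<le> r\<^sup>2"
    using norm_y_le by (simp add: power_mono)
  then show ?thesis
    unfolding x_pert_def
    using Pperp_normalize_add_le[OF norm_x_star x_star_inner_y] order_trans by blast
qed

lemma V_x_star: "V *v x_star j = (lam * s j * s i) *\<^sub>R x_star i"
  by (simp add: x_star_def matrix_vector_mult_scaleR V_e s_mult_s)

lemma x_star_inner_V_y: "x_star i \<bullet> (V *v y j) = 0"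
proof -
  have "x_star i \<bullet> (V *v y j) = (V *v x_star i) \<bullet> y j"
    by (metis V_symmetric dot_lmul_matrix vector_transpose_matrix)
  then show ?thesis
    by (simp add: V_x_star[of i i] x_star_inner_y)
qed

lemma Kw_x_pert_diff_le:
  "\<bar>Kw \<beta> V x_pert i j - Kw \<beta> V x_star i j\<bar> \<le> 4 * \<beta> * B * exp (4 * \<beta> * B) * r"
proof -
  have "\<bar>Kw \<beta> V x_pert i j - Kw \<beta> V x_star i j\<bar> \<le> exp (4 * \<beta> * B * r) - 1"
    using beta_nonneg V_bound norm_x_pert norm_x_star dist_x_pert_x_star by (rule Kw_diff_le)
  also have "\<dots> \<le> 4 * \<beta> * B * r * exp (4 * \<beta> * B * r)"
    by (rule exp_minus_one_le)
  also have "\<dots> \<le> 4 * \<beta> * B * r * exp (4 * \<beta> * B)"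
    using beta_nonneg B_nonneg r_nonneg mult_left_le[OF r_le_1, of "4 * \<beta> * B"]
    by (intro mult_left_mono) auto
  finally show ?thesis
    by (simp add: mult_ac)
qed

lemma Fsys_x_pert_split:
  "Fsys \<beta> V x_pert i = Pperp (x_pert i) (\<Sum>j\<in>UNIV. Kw \<beta> V x_star i j *\<^sub>R (V *v x_pert j))
     + (\<Sum>j\<in>UNIV. (Kw \<beta> V x_pert i j - Kw \<beta> V x_star i j) *\<^sub>R Pperp (x_pert i) (V *v x_pert j))"
proof -
  have "(\<Sum>j\<in>UNIV. Kw \<beta> V x_pert i j *\<^sub>R (V *v x_pert j))
      = (\<Sum>j\<in>UNIV. Kw \<beta> V x_star i j *\<^sub>R (V *v x_pert j))
        + (\<Sum>j\<in>UNIV. (Kw \<beta> V x_pert i j - Kw \<beta> V x_star i j) *\<^sub>R (V *v x_pert j))"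
    by (simp add: scaleR_diff_left sum_subtractf)
  then show ?thesis
    by (simp add: Fsys_def linear_add[OF linear_Pperp] linear_sum[OF linear_Pperp]
        linear_scale[OF linear_Pperp])
qed

lemma sum_frozen_weights_V_x_pert:
  "(\<Sum>j\<in>UNIV. Kw \<beta> V x_star i j *\<^sub>R (V *v x_pert j))
     = (lam * (\<Sum>j\<in>UNIV. Kw \<beta> V x_star i j * s j) * s i) *\<^sub>R x_star i
       + (\<Sum>j\<in>UNIV. Kw \<beta> V x_star i j *\<^sub>R (V *v y j))
       + (\<Sum>j\<in>UNIV. Kw \<beta> V x_star i j *\<^sub>R (V *v (x_pert j - (x_star j + y j))))"
proof -
  have "V *v x_pert j = (lam * s j * s i) *\<^sub>R x_star i + V *v y j + V *v (x_pert j - (x_star j + y j))"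
    for j
    by (simp add: matrix_vector_mult_diff_distrib matrix_vector_right_distrib V_x_star[of j i])
  then show ?thesis
    by (simp add: scaleR_add_right sum.distrib scaleR_sum_left sum_distrib_left mult_ac)
qed

lemma abs_sum_Kw_s_le: "\<bar>\<Sum>j\<in>UNIV. Kw \<beta> V x i j * s j\<bar> \<le> 1"
  using convex_comb_norm_le[OF Kw_nonneg sum_Kw, of s 1] by (simp add: abs_s)

lemma norm_sum_Kw_V_le:
  assumes "\<And>j. norm (v j) \<le> \<rho>"
  shows "norm (\<Sum>j\<in>UNIV. Kw \<beta> V x i j *\<^sub>R (V *v v j)) \<le> B * \<rho>"
  using V_bound assms B_nonneg
  by (intro convex_comb_norm_le[OF Kw_nonneg sum_Kw]) (meson mult_left_mono order_trans)

lemma frozen_weights_remainder: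
  "norm (Pperp (x_pert i) (\<Sum>j\<in>UNIV. Kw \<beta> V x_star i j *\<^sub>R (V *v x_pert j))
      - (- (lam * s i * (\<Sum>j\<in>UNIV. Kw \<beta> V x_star i j * s j)) *\<^sub>R y i
         + (\<Sum>j\<in>UNIV. Kw \<beta> V x_star i j *\<^sub>R (V *v y j))))
     \<le> (\<bar>lam\<bar> + 2 * B) * r\<^sup>2"
proof -
  define a where "a = lam * (\<Sum>j\<in>UNIV. Kw \<beta> V x_star i j * s j) * s i"
  define z where "z = (\<Sum>j\<in>UNIV. Kw \<beta> V x_star i j *\<^sub>R (V *v y j))"
  define R where "R = (\<Sum>j\<in>UNIV. Kw \<beta> V x_star i j *\<^sub>R (V *v (x_pert j - (x_star j + y j))))"
  define T1 where "T1 = a *\<^sub>R (Pperp (x_pert i) (x_star i) + y i)"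
  define T2 where "T2 = ((x_pert i - x_star i) \<bullet> z) *\<^sub>R x_pert i"
  define T3 where "T3 = Pperp (x_pert i) R"
  have "Pperp (x_pert i) z = z - (x_pert i \<bullet> z) *\<^sub>R x_pert i"
    by (simp add: Pperp_def)
  then have split: "Pperp (x_pert i) (\<Sum>j\<in>UNIV. Kw \<beta> V x_star i j *\<^sub>R (V *v x_pert j))
      - (- (lam * s i * (\<Sum>j\<in>UNIV. Kw \<beta> V x_star i j * s j)) *\<^sub>R y i + z) = T1 - T2 + T3"
    unfolding sum_frozen_weights_V_x_pert a_def[symmetric] z_def[symmetric] R_def[symmetric]
      T1_def T2_def T3_def
    by (simp add: linear_add[OF linear_Pperp] linear_scale[OF linear_Pperp] inner_diff_left
        x_star_inner_V_y z_def inner_sum_right algebra_simps a_def)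
  have "\<bar>a\<bar> \<le> \<bar>lam\<bar>"
    using abs_sum_Kw_s_le[of x_star i] by (simp add: a_def abs_mult abs_s mult_left_le)
  then have "norm T1 \<le> \<bar>lam\<bar> * r\<^sup>2"
    unfolding T1_def using Pperp_x_pert_x_star by (simp add: mult_mono)
  moreover have "norm T2 \<le> B * r\<^sup>2"
  proof -
    have "norm z \<le> B * r"
      unfolding z_def using norm_y_le by (rule norm_sum_Kw_V_le)
    then have "\<bar>(x_pert i - x_star i) \<bullet> z\<bar> \<le> r * (B * r)"
      using dist_x_pert_x_star r_nonneg
      by (intro order_trans[OF Cauchy_Schwarz_ineq2] mult_mono) simp_all
    then show ?thesis
      by (simp add: T2_def norm_x_pert power2_eq_square mult_ac)
  qed
  moreover have "norm T3 \<le> B * r\<^sup>2"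
  proof -
    have "norm R \<le> B * r\<^sup>2"
      unfolding R_def using dist_x_pert_tangent by (rule norm_sum_Kw_V_le)
    then show ?thesis
      unfolding T3_def using norm_Pperp_le[OF norm_x_pert] order_trans by blast
  qed
  moreover have "norm (T1 - T2 + T3) \<le> norm T1 + norm T2 + norm T3"
    using norm_triangle_ineq[of "T1 - T2" T3] norm_triangle_ineq4[of T1 T2] by linarith
  moreover have "(\<bar>lam\<bar> + 2 * B) * r\<^sup>2 = \<bar>lam\<bar> * r\<^sup>2 + B * r\<^sup>2 + B * r\<^sup>2"
    by (simp add: algebra_simps)
  ultimately show ?thesis
    unfolding z_def[symmetric] split by linarith
qed

lemma norm_Pperp_x_pert_V_x_pert: "norm (Pperp (x_pert i) (V *v x_pert j)) \<le> (B + \<bar>lam\<bar>) * r"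
proof -
  have "norm (Pperp (x_pert i) (V *v x_pert j)) \<le> norm (V *v x_pert j - (lam * s j * s i) *\<^sub>R x_pert i)"
    using norm_x_pert by (rule norm_Pperp_le_dist)
  also have "V *v x_pert j - (lam * s j * s i) *\<^sub>R x_pert i
      = V *v (x_pert j - x_star j) + (lam * s j * s i) *\<^sub>R (x_star i - x_pert i)"
    by (simp add: matrix_vector_mult_diff_distrib V_x_star[of j i] algebra_simps)
  also have "norm \<dots> \<le> norm (V *v (x_pert j - x_star j)) + norm ((lam * s j * s i) *\<^sub>R (x_star i - x_pert i))"
    by (rule norm_triangle_ineq)
  also have "\<dots> = norm (V *v (x_pert j - x_star j)) + \<bar>lam\<bar> * norm (x_pert i - x_star i)"
    by (simp add: abs_mult abs_s norm_minus_commute)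
  also have "\<dots> \<le> B * r + \<bar>lam\<bar> * r"
    using V_bound[of "x_pert j - x_star j"] mult_left_mono[OF dist_x_pert_x_star B_nonneg]
      mult_left_mono[OF dist_x_pert_x_star abs_ge_zero]
    by (intro add_mono) (blast intro: order_trans)+
  finally show ?thesis
    by (simp add: distrib_right)
qed

lemma weight_change_remainder:
  "norm (\<Sum>j\<in>UNIV. (Kw \<beta> V x_pert i j - Kw \<beta> V x_star i j) *\<^sub>R Pperp (x_pert i) (V *v x_pert j))
     \<le> CARD('n) * (4 * \<beta> * B * exp (4 * \<beta> * B)) * (B + \<bar>lam\<bar>) * r\<^sup>2"
proof -
  have "norm ((Kw \<beta> V x_pert i j - Kw \<beta> V x_star i j) *\<^sub>R Pperp (x_pert i) (V *v x_pert j))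
      \<le> (4 * \<beta> * B * exp (4 * \<beta> * B) * r) * ((B + \<bar>lam\<bar>) * r)" for j
    unfolding norm_scaleR
    using Kw_x_pert_diff_le norm_Pperp_x_pert_V_x_pert
    by (rule mult_mono) (simp_all add: beta_nonneg B_nonneg r_nonneg)
  then have "norm (\<Sum>j\<in>UNIV. (Kw \<beta> V x_pert i j - Kw \<beta> V x_star i j) *\<^sub>R Pperp (x_pert i) (V *v x_pert j))
      \<le> (\<Sum>j\<in>(UNIV :: 'n set). (4 * \<beta> * B * exp (4 * \<beta> * B) * r) * ((B + \<bar>lam\<bar>) * r))"
    by (intro order_trans[OF norm_sum] sum_mono)
  also have "\<dots> = CARD('n) * (4 * \<beta> * B * exp (4 * \<beta> * B)) * (B + \<bar>lam\<bar>) * r\<^sup>2"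
    by (simp add: power2_eq_square mult_ac)
  finally show ?thesis .
qed

lemma Fsys_x_pert_remainder:
  "norm (Fsys \<beta> V x_pert i
      - (- (lam * s i * (\<Sum>j\<in>UNIV. Kw \<beta> V x_star i j * s j)) *\<^sub>R y i
         + (\<Sum>j\<in>UNIV. Kw \<beta> V x_star i j *\<^sub>R (V *v y j))))
     \<le> (\<bar>lam\<bar> + 2 * B + CARD('n) * (4 * \<beta> * B * exp (4 * \<beta> * B)) * (B + \<bar>lam\<bar>)) * r\<^sup>2"
  using frozen_weights_remainder[of i] weight_change_remainder[of i]
    norm_triangle_ineq[of "Pperp (x_pert i) (\<Sum>j\<in>UNIV. Kw \<beta> V x_star i j *\<^sub>R (V *v x_pert j))
      - (- (lam * s i * (\<Sum>j\<in>UNIV. Kw \<beta> V x_star i j * s j)) *\<^sub>R y i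
         + (\<Sum>j\<in>UNIV. Kw \<beta> V x_star i j *\<^sub>R (V *v y j)))"
      "\<Sum>j\<in>UNIV. (Kw \<beta> V x_pert i j - Kw \<beta> V x_star i j) *\<^sub>R Pperp (x_pert i) (V *v x_pert j)"]
  unfolding Fsys_x_pert_split by (simp add: algebra_simps)

end

theorem lemmaA1:
  fixes \<beta> :: real and V :: "real^'d^'d" and e :: "'d \<Rightarrow> real^'d" and lam :: "'d \<Rightarrow> real"
    and p :: 'd and s :: "'n::finite \<Rightarrow> real"
  assumes "\<beta> > 0"
    and "transpose V = V"
    and "\<And>k l. e k \<bullet> e l = (if k = l then 1 else 0)"
    and "\<And>k. V *v e k = lam k *\<^sub>R e k"
    and "\<And>i. s i = 1 \<or> s i = -1"
  shows "\<exists>C \<delta>. \<delta> > 0 \<and>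
    (\<forall>y :: 'n \<Rightarrow> real^'d.
       (\<forall>i. y i \<bullet> (s i *\<^sub>R e p) = 0) \<longrightarrow>
       Max (range (\<lambda>m. norm (y m))) \<le> \<delta> \<longrightarrow>
       (\<forall>i. norm (Fsys \<beta> V (\<lambda>m. (1 / norm (s m *\<^sub>R e p + y m)) *\<^sub>R (s m *\<^sub>R e p + y m)) i
                 - (- (lam p * s i * (\<Sum>j\<in>UNIV. Kw \<beta> V (\<lambda>m. s m *\<^sub>R e p) i j * s j)) *\<^sub>R y i
                    + (\<Sum>j\<in>UNIV. Kw \<beta> V (\<lambda>m. s m *\<^sub>R e p) i j *\<^sub>R (V *v y j))))
            \<le> C * (Max (range (\<lambda>m. norm (y m))))\<^sup>2))"
proof -
  obtain B where V_bound: "\<And>z. norm (V *v z) \<le> B * norm z"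
    using linear_bounded[OF matrix_vector_mul_linear[of V]] by blast
  define C where
    "C = \<bar>lam p\<bar> + 2 * B + CARD('n) * (4 * \<beta> * B * exp (4 * \<beta> * B)) * (B + \<bar>lam p\<bar>)"
  have norm_e: "norm (e p) = 1"
    using assms(3)[of p p] by (simp add: norm_eq_1)
  have "norm (Fsys \<beta> V (\<lambda>m. (1 / norm (s m *\<^sub>R e p + y m)) *\<^sub>R (s m *\<^sub>R e p + y m)) i
        - (- (lam p * s i * (\<Sum>j\<in>UNIV. Kw \<beta> V (\<lambda>m. s m *\<^sub>R e p) i j * s j)) *\<^sub>R y i
           + (\<Sum>j\<in>UNIV. Kw \<beta> V (\<lambda>m. s m *\<^sub>R e p) i j *\<^sub>R (V *v y j))))
      \<le> C * (Max (range (\<lambda>m. norm (y m))))\<^sup>2"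
    if tangent: "\<forall>i. y i \<bullet> (s i *\<^sub>R e p) = 0" and small: "Max (range (\<lambda>m. norm (y m))) \<le> 1"
    for y :: "'n \<Rightarrow> real^'d" and i
  proof -
    interpret pure_mode_perturbation \<beta> V B "e p" "lam p" s y "Max (range (\<lambda>m. norm (y m)))"
    proof
      show "e p \<bullet> y m = 0" for m
        using tangent[rule_format, of m] assms(5)[of m] by (auto simp: inner_commute)
    qed (use assms V_bound norm_e small in auto)
    show ?thesis
      using Fsys_x_pert_remainder[of i] by (simp add: C_def x_pert_def x_star_def)
  qed
  then show ?thesis
    using zero_less_one by blast
qed

end
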